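(* Let $\Gamma=(V,E,w)$ be a finite simple weighted digraph with vertex set $V=\{1,\dots,n\}$ and weights $0\le w_{ij}\le 1$ (with $w_{ij}=0$ iff $(i,j)\notin E$), and let $L=D-A$ be its graph Laplacian. Then $\Gamma$ is a complete dominance graph if and only if $\sigma(L)=\{d^{+}(1),d^{+}(2),\dots,d^{+}(n)\}=\{n-1,n-2,\dots,0\}$ (as multisets).
   Context: $d^{+}(i)=\sum_{j\in V} w_{ij}$, $D=\mathrm{diag}(d^{+}(1),\dots,d^{+}(n))$, $A=[w_{ij}]$, $L=D-A$; $\sigma(L)$ is the multiset of eigenvalues of $L$. A tournament is a digraph such that for each pair of distinct vertices $i,j$ exactly one of $(i,j),(j,i)$ is an edge. A complete dominance graph is an acyclic tournament in which every edge has weight $1$. *)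

theory Defs
  imports "Jordan_Normal_Form.Char_Poly" "HOL-Computational_Algebra.Fundamental_Theorem_Algebra"
begin

text \<open>A weighted digraph on the vertex set {0..<n} (vertex k here stands for vertex k+1 of
the paper) is given by a weight function w; the edge set is {(i,j). w i j \<noteq> 0}.\<close>

definition edges :: "nat \<Rightarrow> (nat \<Rightarrow> nat \<Rightarrow> real) \<Rightarrow> (nat \<times> nat) set" where
  "edges n w = {(i,j). i < n \<and> j < n \<and> w i j \<noteq> 0}"

definition simple_weighted_digraph :: "nat \<Rightarrow> (nat \<Rightarrow> nat \<Rightarrow> real) \<Rightarrow> bool" where
  "simple_weighted_digraph n w \<longleftrightarrow>
     (\<forall>i<n. \<forall>j<n. 0 \<le> w i j \<and> w i j \<le> 1) \<and> (\<forall>i<n. w i i = 0)"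

definition out_degree :: "nat \<Rightarrow> (nat \<Rightarrow> nat \<Rightarrow> real) \<Rightarrow> nat \<Rightarrow> real" where
  "out_degree n w i = (\<Sum>j<n. w i j)"

definition laplacian :: "nat \<Rightarrow> (nat \<Rightarrow> nat \<Rightarrow> real) \<Rightarrow> real mat" where
  "laplacian n w = mat n n (\<lambda>(i,j). (if i = j then out_degree n w i else 0) - w i j)"

definition tournament :: "nat \<Rightarrow> (nat \<Rightarrow> nat \<Rightarrow> real) \<Rightarrow> bool" where
  "tournament n w \<longleftrightarrow> (\<forall>i<n. \<forall>j<n. i \<noteq> j \<longrightarrow>
      ((i,j) \<in> edges n w \<longleftrightarrow> (j,i) \<notin> edges n w))"

definition complete_dominance_graph :: "nat \<Rightarrow> (nat \<Rightarrow> nat \<Rightarrow> real) \<Rightarrow> bool" where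
  "complete_dominance_graph n w \<longleftrightarrow>
     tournament n w \<and> acyclic (edges n w) \<and> (\<forall>(i,j) \<in> edges n w. w i j = 1)"

definition spectrum_mset :: "real mat \<Rightarrow> complex multiset" where
  "spectrum_mset A = proots (char_poly (map_mat complex_of_real A))"

end

theory Submission
  imports Defs "Jordan_Normal_Form.Schur_Decomposition"
begin

text \<open>If the graph is an acyclic tournament with unit weights, it is transitive, so the out-degree
  drops strictly along every edge. Ordering the vertices by out-degree makes \<open>L\<close> triangular,
  hence its eigenvalues are its diagonal entries, the out-degrees; these are pairwise distinct
  integers below \<open>n\<close>, i.e. \<open>0, \<dots>, n - 1\<close>.

  Conversely, the sum of the squared eigenvalues is \<open>tr (L\<^sup>2) = \<Sum> d\<^sub>i\<^sup>2 + \<Sum> w\<^sub>i\<^sub>j w\<^sub>j\<^sub>i\<close>,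
  so if the spectrum consists of the out-degrees there are no 2-cycles, and then
  \<open>w\<^sub>i\<^sub>j + w\<^sub>j\<^sub>i \<le> 1\<close>. The degree sum \<open>n(n - 1)/2\<close> forces equality for every pair: the graph
  is a tournament with unit weights. The \<open>k\<close> vertices of out-degree below \<open>k\<close> carry total
  out-degree \<open>k(k - 1)/2\<close>, which is already used up by the edges among themselves; so no edge
  leads from a vertex of smaller to one of larger out-degree, and the graph is acyclic.\<close>

definition trace :: "'a::comm_semiring_1 mat \<Rightarrow> 'a" where
  "trace A = (\<Sum>i<dim_row A. A $$ (i,i))"

lemma trace_mult_comm:
  assumes "A \<in> carrier_mat n m" and "B \<in> carrier_mat m n"
  shows "trace (A * B) = trace (B * A)"
proof -
  have "trace (A * B) = (\<Sum>i<n. \<Sum>k<m. A $$ (i,k) * B $$ (k,i))"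
    using assms by (simp add: trace_def scalar_prod_def atLeast0LessThan)
  also have "\<dots> = (\<Sum>k<m. \<Sum>i<n. B $$ (k,i) * A $$ (i,k))"
    by (subst sum.swap) (simp add: mult.commute)
  also have "\<dots> = trace (B * A)"
    using assms by (simp add: trace_def scalar_prod_def atLeast0LessThan)
  finally show ?thesis .
qed

lemma trace_similar:
  assumes "similar_mat A B"
  shows "trace A = trace B"
proof -
  obtain n P Q where B: "B \<in> carrier_mat n n" and P: "P \<in> carrier_mat n n"
    and Q: "Q \<in> carrier_mat n n" and QP: "Q * P = 1\<^sub>m n" and A: "A = P * B * Q"
    using similar_matD[OF assms] by auto
  have "trace A = trace (P * (B * Q))"
    by (simp add: A assoc_mult_mat[OF P B Q])
  also have "\<dots> = trace (B * Q * P)"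
    using B P Q by (intro trace_mult_comm) auto
  also have "B * Q * P = B"
    by (simp add: QP assoc_mult_mat[OF B Q P] right_mult_one_mat[OF B])
  finally show ?thesis .
qed

lemma trace_mult_self:
  assumes "A \<in> carrier_mat n n"
  shows "trace (A * A) = (\<Sum>i<n. \<Sum>j<n. A $$ (i,j) * A $$ (j,i))"
  using assms by (simp add: trace_def scalar_prod_def atLeast0LessThan)

lemma trace_mult_self_upper_triangular:
  assumes A: "A \<in> carrier_mat n n" and "upper_triangular A"
  shows "trace (A * A) = (\<Sum>i<n. A $$ (i,i) ^ 2)"
proof -
  have "A $$ (i,j) * A $$ (j,i) = (if j = i then A $$ (i,i) ^ 2 else 0)" if "i < n" "j < n" for i j
    using that A upper_triangularD[OF assms(2)]
    by (cases i j rule: linorder_cases) (auto simp: power2_eq_square)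
  then have "trace (A * A) = (\<Sum>i<n. \<Sum>j<n. if j = i then A $$ (i,i) ^ 2 else 0)"
    unfolding trace_mult_self[OF A] by (intro sum.cong) auto
  then show ?thesis
    by simp
qed

lemma proots_prod_linear_factors: "proots (\<Prod>a\<leftarrow>as. [:- a, 1:]) = mset (as :: 'a::idom list)"
proof (induction as)
  case (Cons a as)
  have "(\<Prod>a\<leftarrow>as. [:- a, 1:]) \<noteq> 0"
    by (auto simp: prod_list_zero_iff)
  with Cons show ?case
    by (simp add: proots_mult del: mult_pCons_left)
qed simp

lemma sum_sq_proots_char_poly:
  fixes A :: "complex mat"
  assumes A: "A \<in> carrier_mat n n"
  shows "(\<Sum>x\<in>#proots (char_poly A). x ^ 2) = trace (A * A)"
proof -
  obtain as where "char_poly A = (\<Prod>a\<leftarrow>as. [:- a, 1:])"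
    using char_poly_factorized[OF A] by blast
  then obtain B where B: "B \<in> carrier_mat n n" and upper: "upper_triangular B"
    and similar: "similar_mat A B"
    using schur_decomposition_exists[OF A] by blast
  have "proots (char_poly A) = mset (diag_mat B)"
    unfolding char_poly_similar[OF similar] char_poly_upper_triangular[OF B upper]
    by (rule proots_prod_linear_factors)
  then have "(\<Sum>x\<in>#proots (char_poly A). x ^ 2) = (\<Sum>i<n. B $$ (i,i) ^ 2)"
    using B by (simp add: diag_mat_def image_mset.compositionality o_def sum_unfold_sum_mset
        atLeast0LessThan)
  also have "\<dots> = trace (B * B)"
    by (rule trace_mult_self_upper_triangular[OF B upper, symmetric])
  also have "\<dots> = trace (A * A)"
  proof -
    have "similar_mat (A ^\<^sub>m 2) (B ^\<^sub>m 2)"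
      using similar similar_mat_wit_pow unfolding similar_mat_def by blast
    then have "similar_mat (A * A) (B * B)"
      using A B by (simp add: numeral_2_eq_2)
    then show ?thesis
      by (rule trace_similar[symmetric])
  qed
  finally show ?thesis .
qed

lemma det_eq_prod_diag_if_potential:
  fixes M :: "'a::comm_ring_1 mat" and f :: "nat \<Rightarrow> 'b::linorder"
  assumes M: "M \<in> carrier_mat n n"
    and potential: "\<And>i j. i < n \<Longrightarrow> j < n \<Longrightarrow> i \<noteq> j \<Longrightarrow> M $$ (i,j) \<noteq> 0 \<Longrightarrow> f j < f i"
  shows "det M = (\<Prod>i<n. M $$ (i,i))"
proof -
  \<comment> \<open>If \<open>i\<close> is a moved index with least \<open>f i\<close>, then \<open>p i\<close> is moved too, so \<open>f (p i) \<ge> f i\<close>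
    and the entry \<open>M $$ (i, p i)\<close> vanishes.\<close>
  have vanish: "(\<Prod>i = 0..<n. M $$ (i, p i)) = 0" if p: "p permutes {0..<n}" "p \<noteq> id" for p
  proof -
    let ?moved = "{i. p i \<noteq> i}"
    have "?moved \<subseteq> {0..<n}"
      using p(1) by (auto simp: permutes_def)
    moreover have "?moved \<noteq> {}"
      using p(2) by auto
    moreover define i where "i = arg_min_on f ?moved"
    ultimately have i: "p i \<noteq> i" "i < n" and least: "\<And>x. p x \<noteq> x \<Longrightarrow> \<not> f x < f i"
      using arg_min_if_finite[of ?moved f] finite_subset[of ?moved "{0..<n}"] by auto
    have "p (p i) \<noteq> p i"
      using i(1) permutes_inj[OF p(1)] by (metis injD)
    then have "M $$ (i, p i) = 0"
      using potential[of i "p i"] least i permutes_in_image[OF p(1)] by fastforce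
    then show ?thesis
      using i(2) by (intro prod_zero) auto
  qed
  have "det M = (\<Sum>p\<in>{p. p permutes {0..<n}}. signof p * (\<Prod>i = 0..<n. M $$ (i, p i)))"
    by (rule det_def'[OF M])
  also have "\<dots> = signof id * (\<Prod>i = 0..<n. M $$ (i, id i))"
    using vanish by (subst sum.mono_neutral_right[of _ "{id}"]) (auto simp: finite_permutations permutes_id)
  finally show ?thesis
    by (simp add: atLeast0LessThan)
qed

lemma laplacian_carrier: "laplacian n w \<in> carrier_mat n n"
  by (simp add: laplacian_def)

lemma laplacian_index:
  "i < n \<Longrightarrow> j < n \<Longrightarrow> laplacian n w $$ (i,j) = (if i = j then out_degree n w i else 0) - w i j"
  by (simp add: laplacian_def)

lemma spectrum_laplacian_if_potential:
  fixes f :: "nat \<Rightarrow> 'b::linorder"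
  assumes potential: "\<And>i j. (i,j) \<in> edges n w \<Longrightarrow> f j < f i"
  shows "spectrum_mset (laplacian n w) = image_mset complex_of_real (mset (map (out_degree n w) [0..<n]))"
proof -
  let ?A = "map_mat complex_of_real (laplacian n w)"
  have no_loops: "w i i = 0" if "i < n" for i
    using potential[of i i] that by (auto simp: edges_def)
  have entry: "char_poly_matrix ?A $$ (i,j) =
      (if i = j then [:- complex_of_real (out_degree n w i), 1:] else [:complex_of_real (w i j):])"
    if "i < n" "j < n" for i j
    using that laplacian_carrier[of n w] by (simp add: char_poly_matrix_def laplacian_index no_loops)
  have char_poly: "char_poly ?A = (\<Prod>i<n. [:- complex_of_real (out_degree n w i), 1:])"
    unfolding char_poly_def using laplacian_carrier[of n w]
    by (subst det_eq_prod_diag_if_potential[where f = f and n = n])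
      (auto simp: entry edges_def intro: potential)
  have "spectrum_mset (laplacian n w) = (\<Sum>i<n. {#complex_of_real (out_degree n w i)#})"
    unfolding spectrum_mset_def char_poly by (subst proots_prod) auto
  then show ?thesis
    by (simp add: sum_unfold_sum_mset atLeast0LessThan image_mset.compositionality o_def)
qed

lemma acyclic_if_potential:
  fixes f :: "'a \<Rightarrow> 'b::order"
  assumes "\<And>x y. (x,y) \<in> r \<Longrightarrow> f y < f x"
  shows "acyclic r"
proof -
  have "f y < f x" if "(x,y) \<in> r\<^sup>+" for x y
    using that by (induction rule: trancl_induct) (auto dest: assms intro: order.strict_trans)
  then show ?thesis
    unfolding acyclic_def by blast
qed

lemma mset_map_upt_eq_if_inj:
  fixes c :: "nat \<Rightarrow> nat"
  assumes "inj_on c {..<n}" and "\<And>i. i < n \<Longrightarrow> c i < n"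
  shows "mset (map c [0..<n]) = mset [0..<n]"
proof -
  have "c ` {..<n} = {..<n}"
    using assms by (intro card_subset_eq) (auto simp: card_image)
  then show ?thesis
    using assms(1) by (subst set_eq_iff_mset_eq_distinct[symmetric])
      (auto simp: distinct_map atLeast0LessThan)
qed

lemma complete_dominance_graph_weight:
  assumes "complete_dominance_graph n w" and "i < n" and "j < n"
  shows "w i j = (if (i,j) \<in> edges n w then 1 else 0)"
  using assms unfolding complete_dominance_graph_def edges_def by auto

lemma trans_edges_if_acyclic_tournament:
  assumes tournament: "tournament n w" and acyclic: "acyclic (edges n w)"
  shows "trans (edges n w)"
proof (rule transI)
  fix i j k
  assume ij: "(i,j) \<in> edges n w" and jk: "(j,k) \<in> edges n w"
  then have ik: "(i,k) \<in> (edges n w)\<^sup>+"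
    by auto
  then have "i \<noteq> k" and "(k,i) \<notin> edges n w"
    using acyclic unfolding acyclic_def by (auto dest: trancl_into_trancl)
  then show "(i,k) \<in> edges n w"
    using tournament ij jk unfolding tournament_def edges_def by auto
qed

lemma out_degree_complete_dominance_graph:
  assumes "complete_dominance_graph n w" and "i < n"
  shows "out_degree n w i = real (card (edges n w `` {i}))"
proof -
  have "out_degree n w i = (\<Sum>j<n. if (i,j) \<in> edges n w then 1 else 0)"
    unfolding out_degree_def using complete_dominance_graph_weight[OF assms] by simp
  also have "\<dots> = real (card ({..<n} \<inter> {j. (i,j) \<in> edges n w}))"
    by (subst sum.If_cases) simp_all
  also have "{..<n} \<inter> {j. (i,j) \<in> edges n w} = edges n w `` {i}"
    by (auto simp: edges_def)
  finally show ?thesis .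
qed

lemma out_degree_less_complete_dominance_graph:
  assumes cdg: "complete_dominance_graph n w" and ij: "(i,j) \<in> edges n w"
  shows "out_degree n w j < out_degree n w i"
proof -
  have "trans (edges n w)" and "acyclic (edges n w)"
    using cdg trans_edges_if_acyclic_tournament unfolding complete_dominance_graph_def by auto
  then have "edges n w `` {j} \<subset> edges n w `` {i}"
    using ij by (auto dest: transD simp: acyclic_irrefl irrefl_def)
  moreover have "finite (edges n w `` {i})"
    by (rule finite_subset[of _ "{..<n}"]) (auto simp: edges_def)
  ultimately show ?thesis
    using ij by (simp add: out_degree_complete_dominance_graph[OF cdg] psubset_card_mono edges_def)
qed

lemma out_degrees_complete_dominance_graph:
  assumes cdg: "complete_dominance_graph n w"
  shows "mset (map (out_degree n w) [0..<n]) = mset (map real [0..<n])"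
proof -
  define c where "c i = card (edges n w `` {i})" for i
  have degree: "out_degree n w i = real (c i)" if "i < n" for i
    using out_degree_complete_dominance_graph[OF cdg that] by (simp add: c_def)
  have "c i < n" if "i < n" for i
  proof -
    have "(i,i) \<notin> edges n w"
      using cdg unfolding complete_dominance_graph_def acyclic_def by blast
    then have "edges n w `` {i} \<subseteq> {..<n} - {i}"
      by (auto simp: edges_def)
    then have "c i \<le> card ({..<n} - {i})"
      unfolding c_def by (intro card_mono) auto
    then show ?thesis
      using that by simp
  qed
  moreover have "inj_on c {..<n}"
  proof (rule inj_onI, rule ccontr)
    fix i j
    assume ij: "i \<in> {..<n}" "j \<in> {..<n}" "c i = c j" "i \<noteq> j"
    then have "(i,j) \<in> edges n w \<or> (j,i) \<in> edges n w"
      using cdg unfolding complete_dominance_graph_def tournament_def by blast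
    then have "out_degree n w j < out_degree n w i \<or> out_degree n w i < out_degree n w j"
      using out_degree_less_complete_dominance_graph[OF cdg] by blast
    then show False
      using ij by (auto simp: degree)
  qed
  ultimately have "mset (map c [0..<n]) = mset [0..<n]"
    by (intro mset_map_upt_eq_if_inj)
  then have "mset (map (real \<circ> c) [0..<n]) = mset (map real [0..<n])"
    by (simp only: mset_map map_map[symmetric])
  also have "map (real \<circ> c) [0..<n] = map (out_degree n w) [0..<n]"
    by (simp add: degree)
  finally show ?thesis .
qed

lemma double_sum_nonneg_eq_0D:
  fixes g :: "'a \<Rightarrow> 'b \<Rightarrow> 'c::ordered_comm_monoid_add"
  assumes "finite A" and "\<And>a. a \<in> A \<Longrightarrow> finite (B a)"
    and "(\<Sum>a\<in>A. \<Sum>b\<in>B a. g a b) = 0"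
    and "\<And>a b. a \<in> A \<Longrightarrow> b \<in> B a \<Longrightarrow> 0 \<le> g a b"
    and "a \<in> A" and "b \<in> B a"
  shows "g a b = 0"
proof -
  have "(\<Sum>(a,b)\<in>Sigma A B. g a b) = 0"
    using assms(1-3) by (simp add: sum.Sigma)
  then show ?thesis
    using assms(1,2,4-6) by (subst (asm) sum_nonneg_eq_0_iff) auto
qed

lemma double_sum_lessThan: "2 * (\<Sum>m<k. real m) = real k * (real k - 1)"
  by (induction k) (simp_all add: algebra_simps)

lemma double_weight_sum_eq_pairs_minus_deficit:
  fixes w :: "'a \<Rightarrow> 'a \<Rightarrow> real"
  assumes S: "finite S" and no_loops: "\<And>a. a \<in> S \<Longrightarrow> w a a = 0"
  shows "2 * (\<Sum>a\<in>S. \<Sum>b\<in>S. w a b) =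
    real (card S) * (real (card S) - 1) - (\<Sum>a\<in>S. \<Sum>b\<in>S - {a}. 1 - (w a b + w b a))"
proof -
  have "(\<Sum>a\<in>S. \<Sum>b\<in>S. w a b + w b a) = (\<Sum>a\<in>S. \<Sum>b\<in>S. w a b) + (\<Sum>a\<in>S. \<Sum>b\<in>S. w b a)"
    by (simp add: sum.distrib)
  also have "(\<Sum>a\<in>S. \<Sum>b\<in>S. w b a) = (\<Sum>a\<in>S. \<Sum>b\<in>S. w a b)"
    by (rule sum.swap)
  finally have symmetrized: "(\<Sum>a\<in>S. \<Sum>b\<in>S. w a b + w b a) = 2 * (\<Sum>a\<in>S. \<Sum>b\<in>S. w a b)"
    by simp
  have "(\<Sum>b\<in>S - {a}. 1 - (w a b + w b a)) = (real (card S) - 1) - (\<Sum>b\<in>S. w a b + w b a)"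
    if a: "a \<in> S" for a
  proof -
    have "card S \<ge> 1"
      using S a by (auto simp: Suc_le_eq card_gt_0_iff)
    then have "(\<Sum>b\<in>S - {a}. 1 - (w a b + w b a)) =
        (real (card S) - 1) - (\<Sum>b\<in>S - {a}. w a b + w b a)"
      using S a by (simp add: sum_subtractf of_nat_diff)
    also have "(\<Sum>b\<in>S - {a}. w a b + w b a) = (\<Sum>b\<in>S. w a b + w b a)"
      by (subst sum.remove[OF S a]) (simp add: no_loops[OF a])
    finally show ?thesis .
  qed
  then have "(\<Sum>a\<in>S. \<Sum>b\<in>S - {a}. 1 - (w a b + w b a)) =
      real (card S) * (real (card S) - 1) - (\<Sum>a\<in>S. \<Sum>b\<in>S. w a b + w b a)"
    by (simp add: sum_subtractf)
  then show ?thesis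
    using symmetrized by linarith
qed

lemma trace_sq_laplacian:
  assumes "\<And>i. i < n \<Longrightarrow> w i i = 0"
  shows "trace (laplacian n w * laplacian n w) =
    (\<Sum>i<n. out_degree n w i ^ 2) + (\<Sum>i<n. \<Sum>j<n. w i j * w j i)"
proof -
  have "trace (laplacian n w * laplacian n w) =
      (\<Sum>i<n. \<Sum>j<n. (if i = j then out_degree n w i ^ 2 else 0) + w i j * w j i)"
    unfolding trace_mult_self[OF laplacian_carrier]
    by (intro sum.cong) (auto simp: laplacian_index assms power2_eq_square)
  then show ?thesis
    by (simp add: sum.distrib)
qed

lemma no_two_cycles_if_spectrum_eq_out_degrees:
  assumes simple: "simple_weighted_digraph n w"
    and spectrum: "spectrum_mset (laplacian n w) =
      image_mset complex_of_real (mset (map (out_degree n w) [0..<n]))"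
    and "i < n" and "j < n"
  shows "w i j * w j i = 0"
proof -
  let ?L = "laplacian n w" and ?d = "out_degree n w"
  have "complex_of_real (\<Sum>i<n. ?d i ^ 2) = (\<Sum>x\<in>#spectrum_mset ?L. x ^ 2)"
    by (simp add: spectrum image_mset.compositionality o_def sum_unfold_sum_mset atLeast0LessThan)
  also have "\<dots> = trace (map_mat complex_of_real ?L * map_mat complex_of_real ?L)"
    unfolding spectrum_mset_def by (rule sum_sq_proots_char_poly[of _ n]) (simp add: laplacian_carrier)
  also have "\<dots> = complex_of_real (trace (?L * ?L))"
    using laplacian_carrier[of n w] by (simp add: trace_mult_self[of _ n])
  also have "trace (?L * ?L) = (\<Sum>i<n. ?d i ^ 2) + (\<Sum>i<n. \<Sum>j<n. w i j * w j i)"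
    using simple by (intro trace_sq_laplacian) (simp add: simple_weighted_digraph_def)
  finally have sum_zero: "(\<Sum>i<n. \<Sum>j<n. w i j * w j i) = 0"
    by (simp only: of_real_eq_iff)
  have nonneg: "0 \<le> w a b * w b a" if "a < n" "b < n" for a b
    using simple that by (intro mult_nonneg_nonneg) (simp_all add: simple_weighted_digraph_def)
  show ?thesis
    by (rule double_sum_nonneg_eq_0D[OF _ _ sum_zero]) (use nonneg assms(3,4) in simp_all)
qed

lemma pair_weights_sum_one_if_out_degrees_upt:
  assumes simple: "simple_weighted_digraph n w"
    and no_two_cycles: "\<And>i j. i < n \<Longrightarrow> j < n \<Longrightarrow> w i j * w j i = 0"
    and degrees: "mset (map (out_degree n w) [0..<n]) = mset (map real [0..<n])"
    and "i < n" and "j < n" and "i \<noteq> j"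
  shows "w i j + w j i = 1"
proof -
  have "(\<Sum>i<n. out_degree n w i) = (\<Sum>m<n. real m)"
    using arg_cong[OF degrees, of sum_mset]
    by (simp add: atLeast0LessThan flip: sum_unfold_sum_mset)
  then have "2 * (\<Sum>a<n. \<Sum>b<n. w a b) = real n * (real n - 1)"
    unfolding out_degree_def double_sum_lessThan[symmetric] by simp
  moreover have "2 * (\<Sum>a<n. \<Sum>b<n. w a b) =
      real n * (real n - 1) - (\<Sum>a<n. \<Sum>b\<in>{..<n} - {a}. 1 - (w a b + w b a))"
    using simple double_weight_sum_eq_pairs_minus_deficit[of "{..<n}" w]
    by (simp add: simple_weighted_digraph_def)
  ultimately have deficit: "(\<Sum>a<n. \<Sum>b\<in>{..<n} - {a}. 1 - (w a b + w b a)) = 0"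
    by linarith
  have nonneg: "0 \<le> 1 - (w a b + w b a)" if "a < n" "b < n" for a b
  proof -
    have "w a b = 0 \<or> w b a = 0"
      using no_two_cycles[OF that] by simp
    moreover have "w a b \<le> 1" "w b a \<le> 1" "0 \<le> w a b" "0 \<le> w b a"
      using simple that by (simp_all add: simple_weighted_digraph_def)
    ultimately show ?thesis
      by linarith
  qed
  have "1 - (w i j + w j i) = 0"
    by (rule double_sum_nonneg_eq_0D[OF _ _ deficit]) (use nonneg assms(4-6) in simp_all)
  then show ?thesis
    by simp
qed

lemma mset_map_eq_upt_inj_image:
  fixes d :: "nat \<Rightarrow> real"
  assumes "mset (map d [0..<n]) = mset (map real [0..<n])"
  shows "inj_on d {..<n}" and "d ` {..<n} = real ` {..<n}"
  using mset_eq_imp_distinct_iff[OF assms] mset_eq_setD[OF assms]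
  by (simp_all add: distinct_map atLeast0LessThan inj_on_def)

lemma mset_map_eq_upt_card_sum_below:
  fixes d :: "nat \<Rightarrow> real"
  assumes degrees: "mset (map d [0..<n]) = mset (map real [0..<n])" and "k \<le> n"
  shows "card {i. i < n \<and> d i < real k} = k"
    and "(\<Sum>i | i < n \<and> d i < real k. d i) = (\<Sum>m<k. real m)"
proof -
  let ?S = "{i. i < n \<and> d i < real k}"
  have inj: "inj_on d ?S"
    using mset_map_eq_upt_inj_image(1)[OF degrees] by (rule inj_on_subset) auto
  have "d ` ?S = {x \<in> d ` {..<n}. x < real k}"
    by auto
  also have "\<dots> = real ` {..<k}"
    using mset_map_eq_upt_inj_image(2)[OF degrees] \<open>k \<le> n\<close> by auto
  finally have image: "d ` ?S = real ` {..<k}" .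
  show "card ?S = k"
    using card_image[OF inj] image by (simp add: card_image)
  show "(\<Sum>i\<in>?S. d i) = (\<Sum>m<k. real m)"
    using sum.reindex[OF inj, of id] image by (simp add: sum.reindex)
qed

lemma no_out_weight_from_tight_set:
  assumes simple: "simple_weighted_digraph n w" and S: "S \<subseteq> {..<n}"
    and pairs: "\<And>a b. a \<in> S \<Longrightarrow> b \<in> S \<Longrightarrow> a \<noteq> b \<Longrightarrow> w a b + w b a = 1"
    and tight: "2 * (\<Sum>a\<in>S. out_degree n w a) = real (card S) * (real (card S) - 1)"
    and "a \<in> S" and "b \<in> {..<n} - S"
  shows "w a b = 0"
proof -
  have finite: "finite S"
    using S finite_subset by blast
  have no_loops: "w a a = 0" if "a \<in> S" for a
    using simple S that unfolding simple_weighted_digraph_def by blast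
  have "(\<Sum>a\<in>S. \<Sum>b\<in>S - {a}. 1 - (w a b + w b a)) = 0"
    by (intro sum.neutral ballI) (auto simp: pairs)
  then have "2 * (\<Sum>a\<in>S. \<Sum>b\<in>S. w a b) = real (card S) * (real (card S) - 1)"
    using double_weight_sum_eq_pairs_minus_deficit[OF finite, of w] no_loops by simp
  moreover have "(\<Sum>a\<in>S. out_degree n w a) =
      (\<Sum>a\<in>S. \<Sum>b\<in>S. w a b) + (\<Sum>a\<in>S. \<Sum>b\<in>{..<n} - S. w a b)"
    unfolding out_degree_def sum.subset_diff[OF S finite_lessThan] by (simp add: sum.distrib)
  ultimately have out_zero: "(\<Sum>a\<in>S. \<Sum>b\<in>{..<n} - S. w a b) = 0"
    using tight by simp
  have nonneg: "0 \<le> w a b" if "a \<in> S" "b \<in> {..<n} - S" for a b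
    using simple S that unfolding simple_weighted_digraph_def by blast
  show ?thesis
    by (rule double_sum_nonneg_eq_0D[OF finite _ out_zero]) (use nonneg assms(5,6) in simp_all)
qed

lemma out_degree_less_if_out_degrees_upt:
  assumes simple: "simple_weighted_digraph n w"
    and pairs: "\<And>i j. i < n \<Longrightarrow> j < n \<Longrightarrow> i \<noteq> j \<Longrightarrow> w i j + w j i = 1"
    and degrees: "mset (map (out_degree n w) [0..<n]) = mset (map real [0..<n])"
    and edge: "(i,j) \<in> edges n w"
  shows "out_degree n w j < out_degree n w i"
proof (rule ccontr)
  let ?d = "out_degree n w"
  assume "\<not> ?d j < ?d i"
  have ij: "i < n" "j < n" "w i j \<noteq> 0"
    using edge by (auto simp: edges_def)
  then have "i \<noteq> j"
    using simple by (auto simp: simple_weighted_digraph_def)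
  then have "?d i < ?d j"
    using \<open>\<not> ?d j < ?d i\<close> mset_map_eq_upt_inj_image(1)[OF degrees] ij
    by (metis inj_on_contraD lessThan_iff linorder_neqE_linordered_idom)
  obtain k where k: "?d j = real k" "k < n"
    using mset_map_eq_upt_inj_image(2)[OF degrees] ij(2) by force
  let ?S = "{l. l < n \<and> ?d l < real k}"
  have "2 * (\<Sum>a\<in>?S. ?d a) = real (card ?S) * (real (card ?S) - 1)"
    using mset_map_eq_upt_card_sum_below[OF degrees, of k] k double_sum_lessThan by simp
  then have "w i j = 0"
    using \<open>?d i < ?d j\<close> k ij
    by (intro no_out_weight_from_tight_set[OF simple, of ?S]) (auto intro: pairs)
  with ij show False
    by simp
qed

lemma complete_dominance_graphI:
  assumes no_loops: "\<And>i. i < n \<Longrightarrow> w i i = 0"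
    and pairs: "\<And>i j. i < n \<Longrightarrow> j < n \<Longrightarrow> i \<noteq> j \<Longrightarrow> w i j + w j i = 1"
    and no_two_cycles: "\<And>i j. i < n \<Longrightarrow> j < n \<Longrightarrow> w i j * w j i = 0"
    and "acyclic (edges n w)"
  shows "complete_dominance_graph n w"
proof -
  have "(w i j = 1 \<and> w j i = 0) \<or> (w i j = 0 \<and> w j i = 1)" if "i < n" "j < n" "i \<noteq> j" for i j
    using pairs[OF that] no_two_cycles[OF that(1,2)] by auto
  then show ?thesis
    using no_loops \<open>acyclic (edges n w)\<close>
    unfolding complete_dominance_graph_def tournament_def edges_def by fastforce
qed

theorem corollary2p7:
  fixes n :: nat and w :: "nat \<Rightarrow> nat \<Rightarrow> real"
  assumes "simple_weighted_digraph n w"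
  shows "complete_dominance_graph n w \<longleftrightarrow>
    (spectrum_mset (laplacian n w) = image_mset complex_of_real (mset (map (out_degree n w) [0..<n]))
     \<and> mset (map (out_degree n w) [0..<n]) = mset (map real [0..<n]))"
    (is "_ \<longleftrightarrow> ?spectrum \<and> ?degrees")
proof
  assume cdg: "complete_dominance_graph n w"
  have ?spectrum
    by (rule spectrum_laplacian_if_potential[where f = "out_degree n w"])
      (rule out_degree_less_complete_dominance_graph[OF cdg])
  moreover have ?degrees
    by (rule out_degrees_complete_dominance_graph[OF cdg])
  ultimately show "?spectrum \<and> ?degrees" ..
next
  assume "?spectrum \<and> ?degrees"
  then have spectrum: ?spectrum and degrees: ?degrees
    by blast+
  have no_two_cycles: "w i j * w j i = 0" if "i < n" "j < n" for i j
    using no_two_cycles_if_spectrum_eq_out_degrees[OF assms spectrum that] .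
  have pairs: "w i j + w j i = 1" if "i < n" "j < n" "i \<noteq> j" for i j
    using pair_weights_sum_one_if_out_degrees_upt[OF assms no_two_cycles degrees that] .
  have "acyclic (edges n w)"
    using out_degree_less_if_out_degrees_upt[OF assms pairs degrees] by (rule acyclic_if_potential)
  with assms pairs no_two_cycles show "complete_dominance_graph n w"
    by (intro complete_dominance_graphI) (simp_all add: simple_weighted_digraph_def)
qed

end
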